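(* Consider the standard DC program $(P)$ under Assumption A. Let $\{x^k\}$ and $\{y^k\}$ (with $y^k\in\partial h(x^k)$) be well-defined and bounded sequences generated by DCA for $(P)$ from $x^0\in\operatorname{dom}\partial h$. Suppose that (a) $f$ is continuous on $\operatorname{dom}f$; (b) $f$ satisfies the Łojasiewicz subgradient inequality at every cluster point of $\{x^k\}$; (c) $\rho_g+\rho_h>0$; (d) $h$ is differentiable with locally Lipschitz continuous gradient. Then $\{x^k\}$ converges.
   Context: $\Gamma_0(\mathbb{R}^n)$ is the set of proper, lower semicontinuous, convex functions $\mathbb{R}^n\to(-\infty,\infty]$. Let $g,h\in\Gamma_0(\mathbb{R}^n)$ and $f=g-h$ with convention $\infty-\infty=\infty$. Problem $(P)$: $\inf\{f(x):x\in\mathbb{R}^n\}$. Assumption A: $g,h\in\Gamma_0(\mathbb{R}^n)$ and the solution set of $(P)$ is nonempty. DCA: given $x^0\in\operatorname{dom}\partial h$, for $k=0,1,\dots$ choose $y^k\in\partial h(x^k)$ and $x^{k+1}\in\operatorname{argmin}\{g(x)-\langle y^k,x\rangle: x\in\mathbb{R}^n\}$. Convexity moduli: $\rho_g,\rho_h\ge0$ are constants such that for all $x,z$, all $w\in\partial g(x)$, $v\in\partial h(x)$: $g(z)\ge g(x)+\langle w,z-x\rangle+\frac{\rho_g}{2}\|z-x\|^2$ and $h(z)\ge h(x)+\langle v,z-x\rangle+\frac{\rho_h}{2}\|z-x\|^2$. For a proper lsc $\phi:\mathbb{R}^n\to(-\infty,\infty]$, the Fréchet subdifferential at $x\in\operatorname{dom}\phi$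 is $\partial^F\phi(x)=\{y:\liminf_{z\to x,z\neq x}\frac{\phi(z)-\phi(x)-\langle y,z-x\rangle}{\|z-x\|}\ge0\}$ ($\emptyset$ if $x\notin\operatorname{dom}\phi$), and the limiting subdifferential is $\partial^L\phi(x)=\{y:\exists x^j\to x,\ \phi(x^j)\to\phi(x),\ y^j\in\partial^F\phi(x^j),\ y^j\to y\}$. $\phi$ satisfies the Łojasiewicz subgradient inequality at $x^*$ if there exist $\theta\in[0,1)$, $M>0$ and a neighbourhood $\mathcal V$ of $x^*$ such that $|\phi(x)-\phi(x^* )|^\theta\le M\|y\|$ for all $x\in\mathcal V$ and all $y\in\partial^L\phi(x)$ (convention $0^0=1$). *)

theory Defs
  imports "HOL-Analysis.Analysis"
begin

definition proper_fun :: "('a \<Rightarrow> ereal) \<Rightarrow> bool" where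
  "proper_fun f \<longleftrightarrow> (\<forall>x. f x \<noteq> -\<infinity>) \<and> (\<exists>x. f x \<noteq> \<infinity>)"

definition lsc_fun :: "('a::topological_space \<Rightarrow> ereal) \<Rightarrow> bool" where
  "lsc_fun f \<longleftrightarrow> (\<forall>x. f x \<le> Liminf (at x) f)"

definition convex_fun :: "('a::real_vector \<Rightarrow> ereal) \<Rightarrow> bool" where
  "convex_fun f \<longleftrightarrow> (\<forall>x y t. 0 < t \<and> t < 1 \<longrightarrow>
      f ((1 - t) *\<^sub>R x + t *\<^sub>R y) \<le> ereal (1 - t) * f x + ereal t * f y)"

definition Gamma0 :: "('a::euclidean_space \<Rightarrow> ereal) set" where
  "Gamma0 = {f. proper_fun f \<and> lsc_fun f \<and> convex_fun f}"

definition edom :: "('a \<Rightarrow> ereal) \<Rightarrow> 'a set" where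
  "edom f = {x. f x < \<infinity>}"

definition subdiff :: "('a::real_inner \<Rightarrow> ereal) \<Rightarrow> 'a \<Rightarrow> 'a set" where
  "subdiff f x = {w. \<bar>f x\<bar> \<noteq> \<infinity> \<and> (\<forall>z. f z \<ge> f x + ereal (inner w (z - x)))}"

text \<open>DC objective with the convention \<infinity> - \<infinity> = \<infinity>
  (for proper g, h the values are never -\<infinity>).\<close>
definition dc_fun :: "('a \<Rightarrow> ereal) \<Rightarrow> ('a \<Rightarrow> ereal) \<Rightarrow> 'a \<Rightarrow> ereal" where
  "dc_fun g h x = (if g x = \<infinity> \<or> h x = \<infinity> then \<infinity> else g x - h x)"

definition DCA_seq :: "('a::real_inner \<Rightarrow> ereal) \<Rightarrow> ('a \<Rightarrow> ereal) \<Rightarrow> (nat \<Rightarrow> 'a) \<Rightarrow> (nat \<Rightarrow> 'a) \<Rightarrow> bool" where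
  "DCA_seq g h x y \<longleftrightarrow> (\<forall>k. y k \<in> subdiff h (x k) \<and>
      (\<forall>z. g (x (Suc k)) - ereal (inner (y k) (x (Suc k))) \<le> g z - ereal (inner (y k) z)))"

definition convexity_modulus :: "('a::real_inner \<Rightarrow> ereal) \<Rightarrow> real \<Rightarrow> bool" where
  "convexity_modulus g \<rho> \<longleftrightarrow> \<rho> \<ge> 0 \<and> (\<forall>x z. \<forall>w\<in>subdiff g x.
      g z \<ge> g x + ereal (inner w (z - x)) + ereal (\<rho> / 2 * (norm (z - x))\<^sup>2))"

definition frechet_subdiff :: "('a::real_inner \<Rightarrow> ereal) \<Rightarrow> 'a \<Rightarrow> 'a set" where
  "frechet_subdiff \<phi> x = (if \<bar>\<phi> x\<bar> = \<infinity> then {} else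
     {y. Liminf (at x) (\<lambda>z. (\<phi> z - \<phi> x - ereal (inner y (z - x))) / ereal (norm (z - x))) \<ge> 0})"

definition limiting_subdiff :: "('a::real_inner \<Rightarrow> ereal) \<Rightarrow> 'a \<Rightarrow> 'a set" where
  "limiting_subdiff \<phi> x = {y. \<exists>xs ys. xs \<longlonglongrightarrow> x \<and> ((\<lambda>j. \<phi> (xs j)) \<longlonglongrightarrow> \<phi> x) \<and>
      (\<forall>j. ys j \<in> frechet_subdiff \<phi> (xs j)) \<and> ys \<longlonglongrightarrow> y}"

text \<open>Power with the convention 0^0 = 1.\<close>
definition loj_pow :: "real \<Rightarrow> real \<Rightarrow> real" where
  "loj_pow a \<theta> = (if a = 0 then (if \<theta> = 0 then 1 else 0) else a powr \<theta>)"

text \<open>Lojasiewicz subgradient inequality at xs (xs is required to lie in dom \<phi>,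
  so that |\<phi>(x) - \<phi>(xs)| makes sense).\<close>
definition lojasiewicz_at :: "('a::real_inner \<Rightarrow> ereal) \<Rightarrow> 'a \<Rightarrow> bool" where
  "lojasiewicz_at \<phi> xs \<longleftrightarrow> \<bar>\<phi> xs\<bar> \<noteq> \<infinity> \<and>
     (\<exists>\<theta> M V. 0 \<le> \<theta> \<and> \<theta> < 1 \<and> M > 0 \<and> open V \<and> xs \<in> V \<and>
       (\<forall>x\<in>V. \<forall>y\<in>limiting_subdiff \<phi> x.
          loj_pow \<bar>real_of_ereal (\<phi> x) - real_of_ereal (\<phi> xs)\<bar> \<theta> \<le> M * norm y))"

definition cluster_point :: "(nat \<Rightarrow> 'a::topological_space) \<Rightarrow> 'a \<Rightarrow> bool" where
  "cluster_point x c \<longleftrightarrow> (\<exists>r. strict_mono r \<and> (x \<circ> r) \<longlonglongrightarrow> c)"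

end

theory Submission
  imports Defs
begin

text \<open>Each DCA step decreases \<open>f\<close> by at least \<open>(\<rho>\<^sub>g + \<rho>\<^sub>h)/2 \<parallel>x\<^sub>k\<^sub>+\<^sub>1 - x\<^sub>k\<parallel>\<^sup>2\<close>, and
  \<open>\<nabla>h(x\<^sub>k) - \<nabla>h(x\<^sub>k\<^sub>+\<^sub>1)\<close> is a limiting subgradient of \<open>f\<close> at \<open>x\<^sub>k\<^sub>+\<^sub>1\<close> whose norm is,
  by local Lipschitz continuity of \<open>\<nabla>h\<close>, at most \<open>L \<parallel>x\<^sub>k\<^sub>+\<^sub>1 - x\<^sub>k\<parallel>\<close>. Near a cluster point
  \<open>c\<close> the \L{}ojasiewicz inequality and the concavity of \<open>t \<mapsto> t\<^sup>1\<^sup>-\<^sup>\<theta>\<close> combine the two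
  estimates into \<open>2 d\<^sub>k\<^sub>+\<^sub>1 \<le> d\<^sub>k + p\<^sub>k\<^sub>+\<^sub>1 - p\<^sub>k\<^sub>+\<^sub>2\<close>, where \<open>d\<^sub>k = \<parallel>x\<^sub>k\<^sub>+\<^sub>1 - x\<^sub>k\<parallel>\<close> and
  \<open>p\<^sub>k = K (f(x\<^sub>k) - f(c))\<^sup>1\<^sup>-\<^sup>\<theta>\<close> decreases to \<open>0\<close>. Telescoping bounds the length of the path
  travelled after an iterate close to \<open>c\<close>, so the iterates never leave the neighbourhood;
  hence \<open>\<Sum> d\<^sub>k < \<infinity>\<close> and the sequence converges.\<close>

lemma two_mul_le_add_if_sq_le_mul:
  fixes a b c :: real
  assumes "0 \<le> b" "0 \<le> c" "a\<^sup>2 \<le> b * c"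
  shows "2 * a \<le> b + c"
proof -
  have "(b + c)\<^sup>2 = (b - c)\<^sup>2 + 4 * (b * c)" by algebra
  moreover have "(2 * a)\<^sup>2 = 4 * a\<^sup>2" by algebra
  ultimately have "(2 * a)\<^sup>2 \<le> (b + c)\<^sup>2"
    using assms(3) zero_le_power2[of "b - c"] by linarith
  moreover have "0 \<le> b + c" using assms(1,2) by simp
  ultimately show ?thesis by (rule power2_le_imp_le)
qed

lemma powr_concave_difference:
  fixes a b \<theta> :: real
  assumes "0 \<le> b" "b \<le> a" "0 < a" "0 \<le> \<theta>" "\<theta> < 1"
  shows "(1 - \<theta>) * (a - b) \<le> a powr \<theta> * (a powr (1 - \<theta>) - b powr (1 - \<theta>))"
proof -
  have young: "a powr \<theta> * b powr (1 - \<theta>) \<le> \<theta> * a + (1 - \<theta>) * b"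
  proof (cases "b = 0")
    case True thus ?thesis using assms by simp
  next
    case False thus ?thesis using assms Youngs_inequality_0[of \<theta> "1 - \<theta>" a b] by simp
  qed
  have "a powr \<theta> * a powr (1 - \<theta>) = a"
    using assms(3) by (simp add: powr_add[symmetric])
  hence "a powr \<theta> * (a powr (1 - \<theta>) - b powr (1 - \<theta>)) = a - a powr \<theta> * b powr (1 - \<theta>)"
    by (simp add: right_diff_distrib)
  moreover have "(1 - \<theta>) * (a - b) = a - (\<theta> * a + (1 - \<theta>) * b)"
    by (simp add: algebra_simps)
  ultimately show ?thesis using young by linarith
qed

lemma lojasiewicz_step_bound:
  fixes A B D D' \<sigma> \<theta> C :: real
  assumes "0 \<le> B" and decrease: "B + \<sigma> * D\<^sup>2 \<le> A" and "0 < \<sigma>"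
    and "0 \<le> \<theta>" "\<theta> < 1" "0 \<le> C" "0 \<le> D" "0 \<le> D'"
    and error: "loj_pow A \<theta> \<le> C * D'"
  shows "2 * D \<le> D' + C / ((1 - \<theta>) * \<sigma>) * (A powr (1 - \<theta>) - B powr (1 - \<theta>))"
proof -
  define \<Delta> where "\<Delta> = A powr (1 - \<theta>) - B powr (1 - \<theta>)"
  have "B \<le> A" using decrease \<open>0 < \<sigma>\<close> by (smt (verit) mult_nonneg_nonneg zero_le_power2)
  hence "0 \<le> \<Delta>" unfolding \<Delta>_def using \<open>0 \<le> B\<close> \<open>\<theta> < 1\<close> by (simp add: powr_mono2)
  show ?thesis
  proof (cases "A = 0")
    case True
    hence "\<sigma> * D\<^sup>2 \<le> 0" using decrease \<open>0 \<le> B\<close> by simp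
    hence "D = 0" using \<open>0 < \<sigma>\<close> by (simp add: mult_le_0_iff)
    thus ?thesis using \<open>0 \<le> D'\<close> \<open>0 \<le> B\<close> \<open>B \<le> A\<close> True by (simp add: \<Delta>_def)
  next
    case False
    hence "0 < A" using \<open>0 \<le> B\<close> \<open>B \<le> A\<close> by simp
    have "(1 - \<theta>) * (\<sigma> * D\<^sup>2) \<le> (1 - \<theta>) * (A - B)"
      using decrease \<open>\<theta> < 1\<close> by (intro mult_left_mono) auto
    also have "\<dots> \<le> A powr \<theta> * \<Delta>"
      unfolding \<Delta>_def using powr_concave_difference \<open>0 \<le> B\<close> \<open>B \<le> A\<close> \<open>0 < A\<close> assms(4,5) by blast
    also have "\<dots> \<le> (C * D') * \<Delta>"
      using error \<open>0 < A\<close> \<open>0 \<le> \<Delta>\<close> by (intro mult_right_mono) (simp_all add: loj_pow_def)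
    finally have "D\<^sup>2 \<le> D' * (C / ((1 - \<theta>) * \<sigma>) * \<Delta>)"
      using \<open>\<theta> < 1\<close> \<open>0 < \<sigma>\<close> by (simp add: field_simps)
    moreover have "0 \<le> C / ((1 - \<theta>) * \<sigma>) * \<Delta>"
      using \<open>0 \<le> C\<close> \<open>\<theta> < 1\<close> \<open>0 < \<sigma>\<close> \<open>0 \<le> \<Delta>\<close> by simp
    ultimately show ?thesis unfolding \<Delta>_def[symmetric]
      using two_mul_le_add_if_sq_le_mul[OF \<open>0 \<le> D'\<close>] by blast
  qed
qed

lemma decseq_tendsto_of_subseq:
  fixes F :: "nat \<Rightarrow> real"
  assumes "decseq F" "strict_mono r" "(F \<circ> r) \<longlonglongrightarrow> l"
  shows "F \<longlonglongrightarrow> l" and "l \<le> F k"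
proof -
  show lower: "l \<le> F k" for k
  proof (rule LIMSEQ_le_const2[OF assms(3)])
    show "\<exists>N. \<forall>n\<ge>N. (F \<circ> r) n \<le> F k"
      using \<open>decseq F\<close> seq_suble[OF assms(2)] unfolding decseq_def
      by (intro exI[of _ k] allI impI) (simp, meson le_trans)
  qed
  obtain L where "F \<longlonglongrightarrow> L" using decseq_convergent[OF assms(1)] lower by blast
  moreover have "L = l"
    using LIMSEQ_subseq_LIMSEQ[OF \<open>F \<longlonglongrightarrow> L\<close> assms(2)] assms(3) by (rule LIMSEQ_unique)
  ultimately show "F \<longlonglongrightarrow> l" by simp
qed

lemma sum_le_of_halving_recursion:
  fixes d p :: "nat \<Rightarrow> real"
  assumes "\<And>i. i < n \<Longrightarrow>
      2 * d (Suc (m + i)) \<le> d (m + i) + (p (Suc (m + i)) - p (Suc (Suc (m + i))))"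
  shows "(\<Sum>i<n. d (Suc (m + i))) + d (m + n) \<le> d m + (p (Suc m) - p (Suc (m + n)))"
  using assms by (induction n) (simp, fastforce)

lemma norm_diff_le_sum_steps:
  fixes x :: "nat \<Rightarrow> 'a::real_normed_vector"
  shows "norm (x (q + n) - x q) \<le> (\<Sum>i<n. norm (x (Suc (q + i)) - x (q + i)))"
  using sum_lessThan_telescope[of "\<lambda>i. x (q + i)" n]
    norm_sum[of "\<lambda>i. x (Suc (q + i)) - x (q + i)" "{..<n}"] by simp

lemma convergent_if_summable_norm_diff:
  fixes x :: "nat \<Rightarrow> 'a::banach"
  assumes "summable (\<lambda>k. norm (x (Suc k) - x k))"
  shows "convergent x"
proof -
  have "convergent (\<lambda>n. \<Sum>k<n. x (Suc k) - x k)"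
    using summable_norm_cancel[OF assms] by (simp add: summable_iff_convergent)
  thus ?thesis
    by (simp add: sum_lessThan_telescope convergent_diff_const_right_iff)
qed

lemma eventually_index_near_subseq_limit:
  assumes "strict_mono r" and "(x \<circ> r) \<longlonglongrightarrow> c" and "0 < \<epsilon>" and "eventually P sequentially"
  obtains m where "P m" and "dist (x (Suc m)) c < \<epsilon>"
proof -
  obtain N where N: "\<And>n. N \<le> n \<Longrightarrow> P n"
    using assms(4) by (auto simp: eventually_sequentially)
  have "\<forall>\<^sub>F j in sequentially. dist (x (r j)) c < \<epsilon> \<and> Suc N \<le> j"
    using tendstoD[OF assms(2,3)] eventually_ge_at_top by (auto simp: o_def intro: eventually_conj)
  then obtain j where j: "dist (x (r j)) c < \<epsilon>" "Suc N \<le> j"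
    by (auto simp: eventually_sequentially)
  have "Suc (r j - 1) = r j" "N \<le> r j - 1"
    using seq_suble[OF assms(1), of j] j(2) by auto
  thus ?thesis using that[of "r j - 1"] N j(1) by simp
qed

lemma steps_tendsto_zero_if_sufficient_decrease:
  fixes x :: "nat \<Rightarrow> 'a::real_normed_vector" and F :: "nat \<Rightarrow> real"
  assumes decrease: "\<And>k. F (Suc k) + \<sigma> * (norm (x (Suc k) - x k))\<^sup>2 \<le> F k"
    and "0 < \<sigma>" and "F \<longlonglongrightarrow> l"
  shows "(\<lambda>k. norm (x (Suc k) - x k)) \<longlonglongrightarrow> 0"
proof -
  have "(\<lambda>k. F k - F (Suc k)) \<longlonglongrightarrow> l - l"
    by (intro tendsto_diff \<open>F \<longlonglongrightarrow> l\<close> LIMSEQ_Suc[OF \<open>F \<longlonglongrightarrow> l\<close>])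
  hence upper_lim: "(\<lambda>k. (F k - F (Suc k)) / \<sigma>) \<longlonglongrightarrow> 0" by (simp add: tendsto_divide_zero)
  have upper: "(norm (x (Suc k) - x k))\<^sup>2 \<le> (F k - F (Suc k)) / \<sigma>" for k
  proof -
    have "\<sigma> * (norm (x (Suc k) - x k))\<^sup>2 \<le> F k - F (Suc k)" using decrease[of k] by linarith
    thus ?thesis using \<open>0 < \<sigma>\<close> by (simp add: pos_le_divide_eq mult.commute)
  qed
  have "(\<lambda>k. (norm (x (Suc k) - x k))\<^sup>2) \<longlonglongrightarrow> 0"
    by (rule tendsto_sandwich[OF _ _ tendsto_const upper_lim])
      (simp_all add: upper always_eventually)
  from tendsto_real_sqrt[OF this] show ?thesis by simp
qed

lemma summable_steps_if_local_halving:
  fixes x :: "nat \<Rightarrow> 'a::real_normed_vector" and p :: "nat \<Rightarrow> real"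
  defines "d \<equiv> \<lambda>k. norm (x (Suc k) - x k)"
  assumes local: "\<And>k. x k \<in> ball c \<delta> \<Longrightarrow> x (Suc k) \<in> ball c \<delta> \<Longrightarrow>
      2 * d (Suc k) \<le> d k + (p (Suc k) - p (Suc (Suc k)))"
    and p_nonneg: "\<And>k. 0 \<le> p k" and "p \<longlonglongrightarrow> 0" and "d \<longlonglongrightarrow> 0" and "0 < \<delta>"
    and "strict_mono r" and "(x \<circ> r) \<longlonglongrightarrow> c"
  shows "summable d"
proof -
  \<comment> \<open>Starting point, later path length and potential each stay within a third of \<open>\<delta>\<close>.\<close>
  define \<epsilon> where "\<epsilon> = \<delta> / 3"
  have "0 < \<epsilon>" using \<open>0 < \<delta>\<close> by (simp add: \<epsilon>_def)
  have "\<forall>\<^sub>F n in sequentially. d n < \<epsilon> \<and> p (Suc n) < \<epsilon>"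
    using order_tendstoD(2)[OF \<open>d \<longlonglongrightarrow> 0\<close> \<open>0 < \<epsilon>\<close>]
      order_tendstoD(2)[OF LIMSEQ_Suc[OF \<open>p \<longlonglongrightarrow> 0\<close>] \<open>0 < \<epsilon>\<close>] by (rule eventually_conj)
  then obtain m where "d m < \<epsilon>" "p (Suc m) < \<epsilon>" "dist (x (Suc m)) c < \<epsilon>"
    using eventually_index_near_subseq_limit[OF \<open>strict_mono r\<close> \<open>(x \<circ> r) \<longlonglongrightarrow> c\<close> \<open>0 < \<epsilon>\<close>] by blast
  hence start: "dist c (x (Suc m)) < \<epsilon>" "d m < \<epsilon>" "p (Suc m) < \<epsilon>"
    by (simp_all add: dist_commute)
  have d_nonneg: "0 \<le> d k" for k by (simp add: d_def)
  have sum_bound: "(\<Sum>i<n. d (Suc (m + i))) \<le> d m + p (Suc m)"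
    if trapped: "\<forall>i\<le>n. x (m + i) \<in> ball c \<delta>" for n
  proof -
    have "(\<Sum>i<n. d (Suc (m + i))) + d (m + n) \<le> d m + (p (Suc m) - p (Suc (m + n)))"
    proof (rule sum_le_of_halving_recursion)
      fix i assume "i < n"
      hence "x (m + i) \<in> ball c \<delta>" "x (Suc (m + i)) \<in> ball c \<delta>"
        using trapped[rule_format, of i] trapped[rule_format, of "Suc i"] by simp_all
      thus "2 * d (Suc (m + i)) \<le> d (m + i) + (p (Suc (m + i)) - p (Suc (Suc (m + i))))"
        by (rule local)
    qed
    thus ?thesis using d_nonneg[of "m + n"] p_nonneg[of "Suc (m + n)"] by linarith
  qed
  have trapped: "\<forall>i\<le>Suc n. x (m + i) \<in> ball c \<delta>" for n
  proof (induction n)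
    case 0
    have "dist c (x m) \<le> dist c (x (Suc m)) + d m"
      using dist_triangle[of c "x m" "x (Suc m)"] by (simp add: d_def dist_norm)
    thus ?case using start \<open>0 < \<epsilon>\<close> by (auto simp: \<epsilon>_def le_Suc_eq)
  next
    case (Suc n)
    have "norm (x (Suc m + Suc n) - x (Suc m)) \<le> (\<Sum>i<Suc n. d (Suc (m + i)))"
      using norm_diff_le_sum_steps[of x "Suc m" "Suc n"] by (simp add: d_def)
    also have "\<dots> \<le> d m + p (Suc m)" using sum_bound Suc.IH by blast
    finally have "dist c (x (Suc m + Suc n)) < \<delta>"
      using dist_triangle[of c "x (Suc m + Suc n)" "x (Suc m)"] start
      by (simp add: \<epsilon>_def dist_norm norm_minus_commute[of "x (Suc m)"])
    thus ?case using Suc.IH by (auto simp: le_Suc_eq)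
  qed
  have "summable (\<lambda>i. d (i + Suc m))"
  proof (rule summableI_nonneg_bounded)
    show "(\<Sum>i<n. d (i + Suc m)) \<le> d m + p (Suc m)" for n
      using sum_bound[of n] trapped[of n] by (simp add: add.commute)
  qed (rule d_nonneg)
  thus ?thesis by (rule iffD1[OF summable_iff_shift])
qed

lemma convergent_if_sufficient_decrease_and_lojasiewicz:
  fixes x :: "nat \<Rightarrow> 'a::banach" and F :: "nat \<Rightarrow> real"
  assumes decrease: "\<And>k. F (Suc k) + \<sigma> * (norm (x (Suc k) - x k))\<^sup>2 \<le> F k" and "0 < \<sigma>"
    and "strict_mono r" and "(x \<circ> r) \<longlonglongrightarrow> c" and "(F \<circ> r) \<longlonglongrightarrow> Fc"
    and "0 \<le> \<theta>" "\<theta> < 1" "0 \<le> C" "0 < \<delta>"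
    and error: "\<And>k. x k \<in> ball c \<delta> \<Longrightarrow> x (Suc k) \<in> ball c \<delta> \<Longrightarrow>
      loj_pow \<bar>F (Suc k) - Fc\<bar> \<theta> \<le> C * norm (x (Suc k) - x k)"
  shows "convergent x"
proof -
  define d where "d = (\<lambda>k. norm (x (Suc k) - x k))"
  define K where "K = C / ((1 - \<theta>) * \<sigma>)"
  define p where "p k = K * (F k - Fc) powr (1 - \<theta>)" for k
  have "decseq F"
    unfolding decseq_Suc_iff using decrease \<open>0 < \<sigma>\<close>
    by (smt (verit) mult_nonneg_nonneg zero_le_power2)
  note F_lim = decseq_tendsto_of_subseq[OF this \<open>strict_mono r\<close> \<open>(F \<circ> r) \<longlonglongrightarrow> Fc\<close>]
  have "0 \<le> K" using \<open>0 \<le> C\<close> \<open>\<theta> < 1\<close> \<open>0 < \<sigma>\<close> by (simp add: K_def)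
  have "d \<longlonglongrightarrow> 0"
    unfolding d_def using decrease \<open>0 < \<sigma>\<close> F_lim(1) by (rule steps_tendsto_zero_if_sufficient_decrease)
  have "p \<longlonglongrightarrow> 0"
  proof -
    have "(\<lambda>k. (F k - Fc) powr (1 - \<theta>)) \<longlonglongrightarrow> 0"
      using F_lim(2) \<open>\<theta> < 1\<close>
      by (intro tendsto_zero_powrI[OF LIM_zero[OF F_lim(1)] tendsto_const]) simp_all
    thus ?thesis unfolding p_def by (rule tendsto_mult_right_zero)
  qed
  have p_nonneg: "0 \<le> p k" for k using \<open>0 \<le> K\<close> by (simp add: p_def)
  have local: "2 * d (Suc k) \<le> d k + (p (Suc k) - p (Suc (Suc k)))"
    if "x k \<in> ball c \<delta>" "x (Suc k) \<in> ball c \<delta>" for k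
  proof -
    have "0 \<le> F (Suc (Suc k)) - Fc" using F_lim(2) by simp
    moreover have "F (Suc (Suc k)) - Fc + \<sigma> * (d (Suc k))\<^sup>2 \<le> F (Suc k) - Fc"
      using decrease[of "Suc k"] by (simp add: d_def)
    moreover have "loj_pow (F (Suc k) - Fc) \<theta> \<le> C * d k"
      using error[OF that] F_lim(2)[of "Suc k"] by (simp add: d_def)
    ultimately have "2 * d (Suc k) \<le> d k + K * ((F (Suc k) - Fc) powr (1 - \<theta>) - (F (Suc (Suc k)) - Fc) powr (1 - \<theta>))"
      unfolding K_def using lojasiewicz_step_bound \<open>0 < \<sigma>\<close> \<open>0 \<le> \<theta>\<close> \<open>\<theta> < 1\<close> \<open>0 \<le> C\<close>
      by (simp add: d_def)
    thus ?thesis by (simp add: p_def right_diff_distrib)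
  qed
  have "summable d"
    using summable_steps_if_local_halving[OF local[unfolded d_def] p_nonneg \<open>p \<longlonglongrightarrow> 0\<close>
        \<open>d \<longlonglongrightarrow> 0\<close>[unfolded d_def] \<open>0 < \<delta>\<close> \<open>strict_mono r\<close> \<open>(x \<circ> r) \<longlonglongrightarrow> c\<close>]
    by (simp add: d_def)
  thus ?thesis unfolding d_def by (rule convergent_if_summable_norm_diff)
qed

lemma convergent_if_descent_and_lojasiewicz_at:
  fixes \<phi> :: "'a::{real_inner, banach} \<Rightarrow> ereal"
  assumes decrease: "\<And>k. real_of_ereal (\<phi> (x (Suc k))) + \<sigma> * (norm (x (Suc k) - x k))\<^sup>2
      \<le> real_of_ereal (\<phi> (x k))" and "0 < \<sigma>"
    and "strict_mono r" and "(x \<circ> r) \<longlonglongrightarrow> c" and "((\<lambda>k. \<phi> (x k)) \<circ> r) \<longlonglongrightarrow> \<phi> c"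
    and "lojasiewicz_at \<phi> c"
    and error: "\<exists>\<delta>>0. \<exists>L. \<forall>k. x k \<in> ball c \<delta> \<longrightarrow> x (Suc k) \<in> ball c \<delta> \<longrightarrow>
      (\<exists>w\<in>limiting_subdiff \<phi> (x (Suc k)). norm w \<le> L * norm (x (Suc k) - x k))"
  shows "convergent x"
proof -
  obtain \<theta> M V where "\<bar>\<phi> c\<bar> \<noteq> \<infinity>" "0 \<le> \<theta>" "\<theta> < 1" "0 < M" "open V" "c \<in> V"
    and loj: "\<And>u w. u \<in> V \<Longrightarrow> w \<in> limiting_subdiff \<phi> u \<Longrightarrow>
      loj_pow \<bar>real_of_ereal (\<phi> u) - real_of_ereal (\<phi> c)\<bar> \<theta> \<le> M * norm w"
    using \<open>lojasiewicz_at \<phi> c\<close> unfolding lojasiewicz_at_def by (elim conjE exE) metis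
  obtain \<delta> L where "0 < \<delta>" and subgrad: "\<And>k. x k \<in> ball c \<delta> \<Longrightarrow> x (Suc k) \<in> ball c \<delta> \<Longrightarrow>
      \<exists>w\<in>limiting_subdiff \<phi> (x (Suc k)). norm w \<le> L * norm (x (Suc k) - x k)"
    using error by blast
  obtain \<delta>' where "0 < \<delta>'" "ball c \<delta>' \<subseteq> V"
    using \<open>open V\<close> \<open>c \<in> V\<close> open_contains_ball by blast
  have "((\<lambda>k. real_of_ereal (\<phi> (x k))) \<circ> r) \<longlonglongrightarrow> real_of_ereal (\<phi> c)"
    using lim_real_of_ereal[of "(\<lambda>k. \<phi> (x k)) \<circ> r" "real_of_ereal (\<phi> c)"]
      \<open>((\<lambda>k. \<phi> (x k)) \<circ> r) \<longlonglongrightarrow> \<phi> c\<close> ereal_real'[OF \<open>\<bar>\<phi> c\<bar> \<noteq> \<infinity>\<close>]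
    by (simp add: o_def)
  moreover have "loj_pow \<bar>real_of_ereal (\<phi> (x (Suc k))) - real_of_ereal (\<phi> c)\<bar> \<theta>
      \<le> (M * max L 0) * norm (x (Suc k) - x k)"
    if in_ball: "x k \<in> ball c (min \<delta> \<delta>')" "x (Suc k) \<in> ball c (min \<delta> \<delta>')" for k
  proof -
    obtain w where w: "w \<in> limiting_subdiff \<phi> (x (Suc k))" "norm w \<le> L * norm (x (Suc k) - x k)"
      using subgrad in_ball by auto
    have "loj_pow \<bar>real_of_ereal (\<phi> (x (Suc k))) - real_of_ereal (\<phi> c)\<bar> \<theta> \<le> M * norm w"
      using loj[OF _ w(1)] in_ball \<open>ball c \<delta>' \<subseteq> V\<close> by auto
    also have "\<dots> \<le> M * (max L 0 * norm (x (Suc k) - x k))"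
      using w(2) \<open>0 < M\<close> by (intro mult_left_mono order_trans[OF w(2)] mult_right_mono) auto
    finally show ?thesis by (simp add: mult.assoc)
  qed
  ultimately show ?thesis
    using convergent_if_sufficient_decrease_and_lojasiewicz[OF decrease \<open>0 < \<sigma>\<close> \<open>strict_mono r\<close>
        \<open>(x \<circ> r) \<longlonglongrightarrow> c\<close> _ \<open>0 \<le> \<theta>\<close> \<open>\<theta> < 1\<close>,
        where C = "M * max L 0" and \<delta> = "min \<delta> \<delta>'"]
      \<open>0 < M\<close> \<open>0 < \<delta>\<close> \<open>0 < \<delta>'\<close> by (simp add: o_def)
qed

lemma subdiff_eq_gradient:
  fixes h :: "'a::real_inner \<Rightarrow> ereal"
  assumes "y \<in> subdiff h p" and finite: "\<And>z. \<bar>h z\<bar> \<noteq> \<infinity>"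
    and grad: "((\<lambda>u. real_of_ereal (h u)) has_derivative (\<lambda>d. inner Gp d)) (at p)"
  shows "y = Gp"
proof -
  have "real_of_ereal (h p) - inner y p \<le> real_of_ereal (h u) - inner y u" for u
  proof -
    have "h p + ereal (inner y (u - p)) \<le> h u" using \<open>y \<in> subdiff h p\<close> by (simp add: subdiff_def)
    hence "ereal (real_of_ereal (h p) + inner y (u - p)) \<le> ereal (real_of_ereal (h u))"
      using ereal_real'[OF finite[of p]] ereal_real'[OF finite[of u]] by (metis plus_ereal.simps(1))
    thus ?thesis by (simp add: inner_diff_right)
  qed
  hence "(\<lambda>d. inner Gp d - inner y d) = (\<lambda>_. 0)"
    by (intro has_derivative_local_min[OF has_derivative_diff[OF grad
          has_derivative_inner_right[OF has_derivative_ident]]] always_eventually) simp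
  from fun_cong[OF this, of "Gp - y"] show ?thesis by (simp add: inner_diff_left[symmetric])
qed

lemma frechet_subdiff_imp_limiting_subdiff:
  "v \<in> frechet_subdiff \<phi> p \<Longrightarrow> v \<in> limiting_subdiff \<phi> p"
  unfolding limiting_subdiff_def
  by (rule CollectI, rule exI[of _ "\<lambda>_. p"], rule exI[of _ "\<lambda>_. v"]) simp

lemma dc_fun_eq_ereal:
  assumes "\<bar>g p\<bar> \<noteq> \<infinity>" "\<bar>h p\<bar> \<noteq> \<infinity>"
  shows "dc_fun g h p = ereal (real_of_ereal (g p) - real_of_ereal (h p))"
  using assms by (cases "g p"; cases "h p") (simp_all add: dc_fun_def)

text \<open>Below the Fr\'echet quotient of \<open>g - h\<close> lies the quotient \<open>q\<close> of the first-order
  remainder of \<open>h\<close>, which tends to \<open>0\<close>.\<close>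

lemma dc_fun_frechet_subdiff:
  fixes g h :: "'a::{real_inner, perfect_space} \<Rightarrow> ereal"
  assumes "y \<in> subdiff g p" and "proper_fun g" and finite: "\<And>z. \<bar>h z\<bar> \<noteq> \<infinity>"
    and grad: "((\<lambda>u. real_of_ereal (h u)) has_derivative (\<lambda>d. inner Gp d)) (at p)"
  shows "y - Gp \<in> frechet_subdiff (dc_fun g h) p"
proof -
  define H where "H u = real_of_ereal (h u)" for u
  define q where "q z = (H p + inner Gp (z - p) - H z) / norm (z - p)" for z
  have "\<bar>g p\<bar> \<noteq> \<infinity>" and subgrad: "\<And>z. g p + ereal (inner y (z - p)) \<le> g z"
    using \<open>y \<in> subdiff g p\<close> by (auto simp: subdiff_def)
  have f_p: "dc_fun g h p = ereal (real_of_ereal (g p) - H p)"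
    unfolding H_def using \<open>\<bar>g p\<bar> \<noteq> \<infinity>\<close> finite[of p] by (rule dc_fun_eq_ereal)
  have "((\<lambda>z. norm (H z - H p - inner Gp (z - p)) / norm (z - p)) \<longlongrightarrow> 0) (at p)"
    using grad unfolding has_derivative_iff_norm H_def by auto
  moreover have "norm (q z) = norm (H z - H p - inner Gp (z - p)) / norm (z - p)" for z
  proof -
    have "\<bar>H p + inner Gp (z - p) - H z\<bar> = \<bar>H z - H p - inner Gp (z - p)\<bar>" by arith
    thus ?thesis by (simp add: q_def)
  qed
  ultimately have "((\<lambda>z. norm (q z)) \<longlongrightarrow> 0) (at p)" by simp
  hence "(q \<longlongrightarrow> 0) (at p)" by (rule tendsto_norm_zero_cancel)
  hence "((\<lambda>z. ereal (q z)) \<longlongrightarrow> ereal 0) (at p)" by (rule tendsto_ereal)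
  hence "Liminf (at p) (\<lambda>z. ereal (q z)) = 0"
    by (intro lim_imp_Liminf) (simp_all add: zero_ereal_def)
  moreover have "ereal (q z) \<le> (dc_fun g h z - dc_fun g h p - ereal (inner (y - Gp) (z - p))) / ereal (norm (z - p))"
    if "z \<noteq> p" for z
  proof (cases "g z = \<infinity>")
    case True
    thus ?thesis using that by (simp add: f_p dc_fun_def)
  next
    case False
    define G where "G u = real_of_ereal (g u)" for u
    have g_z: "g z = ereal (G z)" and g_p: "g p = ereal (G p)"
      using False \<open>proper_fun g\<close> \<open>\<bar>g p\<bar> \<noteq> \<infinity>\<close> unfolding G_def
      by (cases "g z"; auto simp: proper_fun_def)+
    have "G p + inner y (z - p) \<le> G z" using subgrad[of z] unfolding g_z g_p by simp
    hence "q z * norm (z - p) \<le> G z - H z - (G p - H p) - inner (y - Gp) (z - p)"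
      using that unfolding q_def inner_diff_left by simp
    hence "q z \<le> (G z - H z - (G p - H p) - inner (y - Gp) (z - p)) / norm (z - p)"
      using that by (simp add: pos_le_divide_eq)
    moreover have "dc_fun g h z = ereal (G z - H z)"
      unfolding G_def H_def using False \<open>proper_fun g\<close> finite[of z]
      by (intro dc_fun_eq_ereal) (auto simp: proper_fun_def)
    ultimately show ?thesis using that by (simp add: f_p g_p)
  qed
  hence "Liminf (at p) (\<lambda>z. ereal (q z))
      \<le> Liminf (at p) (\<lambda>z. (dc_fun g h z - dc_fun g h p - ereal (inner (y - Gp) (z - p))) / ereal (norm (z - p)))"
    by (intro Liminf_mono) (auto simp: eventually_at intro!: exI[of _ 1])
  ultimately show ?thesis by (simp add: frechet_subdiff_def f_p)
qed

lemma dc_fun_sufficient_decrease: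
  fixes g h :: "'a::real_inner \<Rightarrow> ereal"
  assumes "w \<in> subdiff g v" "w \<in> subdiff h u"
    and "convexity_modulus g \<rho>g" "convexity_modulus h \<rho>h"
    and "\<bar>g u\<bar> \<noteq> \<infinity>" "\<bar>h v\<bar> \<noteq> \<infinity>"
  shows "real_of_ereal (dc_fun g h v) + (\<rho>g + \<rho>h) / 2 * (norm (v - u))\<^sup>2
    \<le> real_of_ereal (dc_fun g h u)"
proof -
  have "\<bar>g v\<bar> \<noteq> \<infinity>" "\<bar>h u\<bar> \<noteq> \<infinity>" using assms(1,2) by (simp_all add: subdiff_def)
  have "g v + ereal (inner w (u - v)) + ereal (\<rho>g / 2 * (norm (u - v))\<^sup>2) \<le> g u"
    using assms(1,3) by (simp add: convexity_modulus_def)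
  hence "real_of_ereal (g v) + inner w (u - v) + \<rho>g / 2 * (norm (v - u))\<^sup>2 \<le> real_of_ereal (g u)"
    using ereal_real'[OF \<open>\<bar>g v\<bar> \<noteq> \<infinity>\<close>] ereal_real'[OF \<open>\<bar>g u\<bar> \<noteq> \<infinity>\<close>]
    by (metis ereal_less_eq(3) norm_minus_commute plus_ereal.simps(1))
  moreover have "h u + ereal (inner w (v - u)) + ereal (\<rho>h / 2 * (norm (v - u))\<^sup>2) \<le> h v"
    using assms(2,4) by (simp add: convexity_modulus_def)
  hence "real_of_ereal (h u) + inner w (v - u) + \<rho>h / 2 * (norm (v - u))\<^sup>2 \<le> real_of_ereal (h v)"
    using ereal_real'[OF \<open>\<bar>h v\<bar> \<noteq> \<infinity>\<close>] ereal_real'[OF \<open>\<bar>h u\<bar> \<noteq> \<infinity>\<close>]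
    by (metis ereal_less_eq(3) plus_ereal.simps(1))
  moreover have "inner w (v - u) = - inner w (u - v)" by (simp add: inner_diff_right)
  ultimately show ?thesis
    using dc_fun_eq_ereal[of g v h] dc_fun_eq_ereal[of g u h]
      \<open>\<bar>g v\<bar> \<noteq> \<infinity>\<close> \<open>\<bar>h v\<bar> \<noteq> \<infinity>\<close> \<open>\<bar>g u\<bar> \<noteq> \<infinity>\<close> \<open>\<bar>h u\<bar> \<noteq> \<infinity>\<close>
    by (simp add: field_simps)
qed

lemma DCA_seq_subdiff_next:
  assumes "proper_fun g" and "DCA_seq g h x y"
  shows "y k \<in> subdiff g (x (Suc k))"
proof -
  have argmin: "g (x (Suc k)) - ereal (inner (y k) (x (Suc k))) \<le> g z - ereal (inner (y k) z)" for z
    using \<open>DCA_seq g h x y\<close> by (simp add: DCA_seq_def)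
  have no_minf: "g z \<noteq> -\<infinity>" for z using \<open>proper_fun g\<close> by (simp add: proper_fun_def)
  obtain z0 where "g z0 \<noteq> \<infinity>" using \<open>proper_fun g\<close> by (auto simp: proper_fun_def)
  hence "g (x (Suc k)) \<noteq> \<infinity>" using argmin[of z0] no_minf[of z0] by (cases "g z0") auto
  then obtain a where a: "g (x (Suc k)) = ereal a"
    using no_minf[of "x (Suc k)"] by (cases "g (x (Suc k))") auto
  have "g (x (Suc k)) + ereal (inner (y k) (z - x (Suc k))) \<le> g z" for z
  proof (cases "g z")
    case (real b)
    thus ?thesis using argmin[of z] by (simp add: a inner_diff_right)
  qed (simp_all add: no_minf)
  thus ?thesis by (simp add: subdiff_def a)
qed

lemma tendsto_values_if_continuous_on_edom:
  fixes f :: "'a::topological_space \<Rightarrow> ereal"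
  assumes "continuous_on (edom f) f" and "\<bar>f c\<bar> \<noteq> \<infinity>" and "\<And>k. \<bar>f (x k)\<bar> \<noteq> \<infinity>"
    and "(x \<circ> r) \<longlonglongrightarrow> c"
  shows "((\<lambda>k. f (x k)) \<circ> r) \<longlonglongrightarrow> f c"
proof -
  have "c \<in> edom f" using assms(2) by (cases "f c") (simp_all add: edom_def)
  moreover have "x k \<in> edom f" for k using assms(3)[of k] by (cases "f (x k)") (simp_all add: edom_def)
  ultimately show ?thesis
    using continuous_on_tendsto_compose[OF assms(1) assms(4)[unfolded o_def]] by (simp add: o_def)
qed

lemma DCA_seq_dc_fun_finite:
  assumes "proper_fun g" "DCA_seq g h x y" and "\<And>z. \<bar>h z\<bar> \<noteq> \<infinity>"
  shows "\<bar>dc_fun g h (x (Suc k))\<bar> \<noteq> \<infinity>"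
  using DCA_seq_subdiff_next[OF assms(1,2), of k] assms(3)[of "x (Suc k)"]
    dc_fun_eq_ereal[of g "x (Suc k)" h] by (simp add: subdiff_def)

lemma DCA_seq_sufficient_decrease:
  assumes "proper_fun g" "DCA_seq g h x y" and "\<And>z. \<bar>h z\<bar> \<noteq> \<infinity>"
    and "convexity_modulus g \<rho>g" "convexity_modulus h \<rho>h"
  shows "real_of_ereal (dc_fun g h (x (Suc (Suc k))))
      + (\<rho>g + \<rho>h) / 2 * (norm (x (Suc (Suc k)) - x (Suc k)))\<^sup>2 \<le> real_of_ereal (dc_fun g h (x (Suc k)))"
proof (rule dc_fun_sufficient_decrease)
  show "y (Suc k) \<in> subdiff g (x (Suc (Suc k)))" by (rule DCA_seq_subdiff_next[OF assms(1,2)])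
  show "y (Suc k) \<in> subdiff h (x (Suc k))" using assms(2) by (simp add: DCA_seq_def)
  show "\<bar>g (x (Suc k))\<bar> \<noteq> \<infinity>"
    using DCA_seq_subdiff_next[OF assms(1,2), of k] by (simp add: subdiff_def)
qed (use assms in simp_all)

lemma DCA_seq_relative_error:
  fixes g h :: "'a::{real_inner, perfect_space} \<Rightarrow> ereal"
  assumes "proper_fun g" "DCA_seq g h x y" and h_finite: "\<And>z. \<bar>h z\<bar> \<noteq> \<infinity>"
    and h_grad: "\<And>z. ((\<lambda>u. real_of_ereal (h u)) has_derivative (\<lambda>d. inner (G z) d)) (at z)"
    and lip: "\<And>u v. u \<in> S \<Longrightarrow> v \<in> S \<Longrightarrow> norm (G u - G v) \<le> L * norm (u - v)"
    and "x k \<in> S" "x (Suc k) \<in> S"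
  shows "\<exists>w\<in>limiting_subdiff (dc_fun g h) (x (Suc k)). norm w \<le> L * norm (x (Suc k) - x k)"
proof
  show "y k - G (x (Suc k)) \<in> limiting_subdiff (dc_fun g h) (x (Suc k))"
    by (intro frechet_subdiff_imp_limiting_subdiff dc_fun_frechet_subdiff
        DCA_seq_subdiff_next[OF assms(1,2)] assms(1) h_finite h_grad)
  have "y k \<in> subdiff h (x k)" using assms(2) by (simp add: DCA_seq_def)
  hence "y k = G (x k)" using h_finite h_grad by (rule subdiff_eq_gradient)
  thus "norm (y k - G (x (Suc k))) \<le> L * norm (x (Suc k) - x k)"
    using lip[OF assms(6,7)] norm_minus_commute[of "x k" "x (Suc k)"] by simp
qed

theorem theorem4:
  fixes g h :: "'a::euclidean_space \<Rightarrow> ereal"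
    and x y :: "nat \<Rightarrow> 'a"
    and \<rho>g \<rho>h :: real
  assumes gG: "g \<in> Gamma0" and hG: "h \<in> Gamma0"
    and sol: "\<exists>xs. \<forall>z. dc_fun g h xs \<le> dc_fun g h z"
    and dca: "DCA_seq g h x y"
    and bx: "bounded (range x)" and "bounded (range y)"
    and mg: "convexity_modulus g \<rho>g" and mh: "convexity_modulus h \<rho>h"
    and cont: "continuous_on (edom (dc_fun g h)) (dc_fun g h)"
    and loj: "\<And>c. cluster_point x c \<Longrightarrow> lojasiewicz_at (dc_fun g h) c"
    and rho: "\<rho>g + \<rho>h > 0"
    and hdiff: "\<exists>G. (\<forall>z. \<bar>h z\<bar> \<noteq> \<infinity> \<and>
                   ((\<lambda>u. real_of_ereal (h u)) has_derivative (\<lambda>d. inner (G z) d)) (at z)) \<and>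
                (\<forall>z. \<exists>e>0. \<exists>L. \<forall>u\<in>ball z e. \<forall>v\<in>ball z e. norm (G u - G v) \<le> L * norm (u - v))"
  shows "convergent x"
proof -
  obtain G where h_finite: "\<And>z. \<bar>h z\<bar> \<noteq> \<infinity>"
    and h_grad: "\<And>z. ((\<lambda>u. real_of_ereal (h u)) has_derivative (\<lambda>d. inner (G z) d)) (at z)"
    and G_lip: "\<And>z. \<exists>e>0. \<exists>L. \<forall>u\<in>ball z e. \<forall>v\<in>ball z e. norm (G u - G v) \<le> L * norm (u - v)"
    using hdiff by (elim exE conjE) metis
  have "proper_fun g" using gG by (simp add: Gamma0_def)
  note f_finite = DCA_seq_dc_fun_finite[OF \<open>proper_fun g\<close> dca h_finite]
  \<comment> \<open>\<open>x 0\<close> need not lie in the domain of \<open>g\<close>, so the argument runs on the shifted sequence.\<close>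
  have "bounded (range (\<lambda>k. x (Suc k)))" using bx by (rule bounded_subset) auto
  then obtain r c where "strict_mono r" and lim: "((\<lambda>k. x (Suc k)) \<circ> r) \<longlonglongrightarrow> c"
    using bounded_imp_convergent_subsequence by blast
  have "cluster_point x c"
    unfolding cluster_point_def using \<open>strict_mono r\<close> lim
    by (intro exI[of _ "Suc \<circ> r"]) (simp add: strict_mono_def o_def)
  hence loj_c: "lojasiewicz_at (dc_fun g h) c" by (rule loj)
  hence f_lim: "((\<lambda>k. dc_fun g h (x (Suc k))) \<circ> r) \<longlonglongrightarrow> dc_fun g h c"
    using tendsto_values_if_continuous_on_edom[OF cont _ f_finite lim]
    by (simp add: lojasiewicz_at_def)
  obtain e L where "0 < e" "\<And>u v. u \<in> ball c e \<Longrightarrow> v \<in> ball c e \<Longrightarrow> norm (G u - G v) \<le> L * norm (u - v)"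
    using G_lip[of c] by blast
  hence error: "\<exists>\<delta>>0. \<exists>L. \<forall>k. x (Suc k) \<in> ball c \<delta> \<longrightarrow> x (Suc (Suc k)) \<in> ball c \<delta> \<longrightarrow>
      (\<exists>w\<in>limiting_subdiff (dc_fun g h) (x (Suc (Suc k))). norm w \<le> L * norm (x (Suc (Suc k)) - x (Suc k)))"
    using DCA_seq_relative_error[OF \<open>proper_fun g\<close> dca h_finite h_grad] by blast
  have "convergent (\<lambda>k. x (Suc k))"
    using convergent_if_descent_and_lojasiewicz_at[where x = "\<lambda>k. x (Suc k)" and \<phi> = "dc_fun g h"
        and \<sigma> = "(\<rho>g + \<rho>h) / 2", OF DCA_seq_sufficient_decrease[OF \<open>proper_fun g\<close> dca h_finite mg mh]
        _ \<open>strict_mono r\<close> lim f_lim loj_c error] rho by simp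
  thus ?thesis by (simp add: convergent_Suc_iff)
qed

end
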